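(* For every sparse paving matroid $M$, the basis pair graph $G(M)$ is connected.
   Context: A matroid $M$ of rank $r$ is sparse paving if every nonspanning circuit of $M$ is a hyperplane; equivalently, every $r$-element subset of $E(M)$ is either a basis or a circuit-hyperplane. The basis pair graph $G(M)$ has as vertices the ordered triples $(A_1,A_2,A_3)$ of subsets of $E(M)$ where $A_1$ and $A_2$ are disjoint bases of $M$ and $A_3=E(M)-(A_1\cup A_2)$ ($A_3$ need not be a basis). Two vertices $(A_1,A_2,A_3)$ and $(B_1,B_2,B_3)$ are adjacent if $|A_1-B_1|+|A_2-B_2|+|A_3-B_3|=2$, i.e., one is obtained from the other by switching a pair of elements lying in two different sets of the triple. (A graph with no vertices is regarded as connected.) *)

theory Defs
  imports Main
begin

definition matroid :: "'a set \<Rightarrow> ('a set \<Rightarrow> bool) \<Rightarrow> bool" where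
  "matroid E indep \<longleftrightarrow>
     finite E \<and>
     (\<forall>X. indep X \<longrightarrow> X \<subseteq> E) \<and>
     indep {} \<and>
     (\<forall>X Y. indep X \<and> Y \<subseteq> X \<longrightarrow> indep Y) \<and>
     (\<forall>X Y. indep X \<and> indep Y \<and> card X < card Y \<longrightarrow>
        (\<exists>e \<in> Y - X. indep (insert e X)))"

definition basis :: "'a set \<Rightarrow> ('a set \<Rightarrow> bool) \<Rightarrow> 'a set \<Rightarrow> bool" where
  "basis E indep B \<longleftrightarrow> indep B \<and> (\<forall>X. indep X \<and> B \<subseteq> X \<and> X \<subseteq> E \<longrightarrow> X = B)"

definition circuit :: "'a set \<Rightarrow> ('a set \<Rightarrow> bool) \<Rightarrow> 'a set \<Rightarrow> bool" where
  "circuit E indep C \<longleftrightarrow> C \<subseteq> E \<and> \<not> indep C \<and> (\<forall>X. X \<subset> C \<longrightarrow> indep X)"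

definition rk :: "('a set \<Rightarrow> bool) \<Rightarrow> 'a set \<Rightarrow> nat" where
  "rk indep X = Max {card I | I. I \<subseteq> X \<and> indep I}"

definition mrank :: "'a set \<Rightarrow> ('a set \<Rightarrow> bool) \<Rightarrow> nat" where
  "mrank E indep = rk indep E"

definition cl :: "'a set \<Rightarrow> ('a set \<Rightarrow> bool) \<Rightarrow> 'a set \<Rightarrow> 'a set" where
  "cl E indep X = {e \<in> E. rk indep (insert e X) = rk indep X}"

definition flat :: "'a set \<Rightarrow> ('a set \<Rightarrow> bool) \<Rightarrow> 'a set \<Rightarrow> bool" where
  "flat E indep F \<longleftrightarrow> F \<subseteq> E \<and> cl E indep F = F"

definition hyperplane :: "'a set \<Rightarrow> ('a set \<Rightarrow> bool) \<Rightarrow> 'a set \<Rightarrow> bool" where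
  "hyperplane E indep H \<longleftrightarrow> flat E indep H \<and> mrank E indep \<ge> 1 \<and>
     rk indep H = mrank E indep - 1"

definition spanning :: "'a set \<Rightarrow> ('a set \<Rightarrow> bool) \<Rightarrow> 'a set \<Rightarrow> bool" where
  "spanning E indep X \<longleftrightarrow> X \<subseteq> E \<and> rk indep X = mrank E indep"

definition sparse_paving :: "'a set \<Rightarrow> ('a set \<Rightarrow> bool) \<Rightarrow> bool" where
  "sparse_paving E indep \<longleftrightarrow> matroid E indep \<and>
     (\<forall>C. circuit E indep C \<and> \<not> spanning E indep C \<longrightarrow> hyperplane E indep C)"

definition bp_vertices :: "'a set \<Rightarrow> ('a set \<Rightarrow> bool) \<Rightarrow> ('a set \<times> 'a set \<times> 'a set) set" where
  "bp_vertices E indep = {(A1, A2, A3). basis E indep A1 \<and> basis E indep A2 \<and>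
       A1 \<inter> A2 = {} \<and> A3 = E - (A1 \<union> A2)}"

definition bp_adj :: "('a set \<times> 'a set \<times> 'a set) \<Rightarrow> ('a set \<times> 'a set \<times> 'a set) \<Rightarrow> bool" where
  "bp_adj A B \<longleftrightarrow> (case A of (A1, A2, A3) \<Rightarrow> case B of (B1, B2, B3) \<Rightarrow>
      card (A1 - B1) + card (A2 - B2) + card (A3 - B3) = 2)"

definition graph_connected :: "'v set \<Rightarrow> ('v \<Rightarrow> 'v \<Rightarrow> bool) \<Rightarrow> bool" where
  "graph_connected V adj \<longleftrightarrow>
     (\<forall>x\<in>V. \<forall>y\<in>V. (\<lambda>u v. u \<in> V \<and> v \<in> V \<and> adj u v)\<^sup>*\<^sup>* x y)"

end

theory Submission
  imports Defs
begin

text \<open>In a sparse paving matroid of rank r, an r-set that is not a basis is a circuit-hyperplane,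
  hence closed, so no two r-sets differing by a single exchange are both nonbases; the argument
  uses nothing else. Given vertices (A1, A2, A3) and (B1, B2, B3), first walk to a vertex with
  first component B1, each time decreasing |A1 - B1|: an element of B1 - A1 is moved into A1
  from A3, either directly or after exchanging it into A3 from A2, or it is swapped
  simultaneously with an element of A1 - B1 between A1 and A2. When none of these moves exists,
  the exchange property forces |A1 - B1| = 2 and A3 = {}, and a three-step walk that takes an
  element of A1 \<inter> B1 out of A1 and puts it back reaches B1. Then, with B1 fixed, exchanges
  between the second and third component reach B2.\<close>

lemma finite_indep_card_set: "finite X \<Longrightarrow> finite {card I |I. I \<subseteq> X \<and> indep I}"
  by (rule finite_subset[of _ "card ` Pow X"]) auto

lemma indep_subset_ground: "matroid E indep \<Longrightarrow> indep X \<Longrightarrow> X \<subseteq> E"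
  by (auto simp: matroid_def)

lemma indep_finite: "matroid E indep \<Longrightarrow> indep X \<Longrightarrow> finite X"
  by (auto simp: matroid_def intro: finite_subset)

lemma indep_augment:
  "matroid E indep \<Longrightarrow> indep X \<Longrightarrow> indep Y \<Longrightarrow> card X < card Y \<Longrightarrow> \<exists>e\<in>Y - X. indep (insert e X)"
  by (simp add: matroid_def)

lemma rk_attained:
  assumes m: "matroid E indep" and XE: "X \<subseteq> E"
  shows "\<exists>I \<subseteq> X. indep I \<and> card I = rk indep X"
proof -
  have "finite X" using m XE finite_subset by (auto simp: matroid_def)
  moreover have "0 \<in> {card I |I. I \<subseteq> X \<and> indep I}"
    using m by (auto simp: matroid_def intro!: exI[of _ "{}"])
  ultimately have "rk indep X \<in> {card I |I. I \<subseteq> X \<and> indep I}"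
    unfolding rk_def using Max_in[OF finite_indep_card_set] by blast
  then show ?thesis by auto
qed

lemma card_le_rk:
  assumes m: "matroid E indep" and XE: "X \<subseteq> E" and "I \<subseteq> X" "indep I"
  shows "card I \<le> rk indep X"
proof -
  have "finite X" using m XE finite_subset by (auto simp: matroid_def)
  then show ?thesis unfolding rk_def using Max_ge[OF finite_indep_card_set] assms by blast
qed

lemma basis_iff_card_mrank:
  assumes m: "matroid E indep"
  shows "basis E indep B \<longleftrightarrow> indep B \<and> card B = mrank E indep"
proof
  assume b: "basis E indep B"
  then have iB: "indep B" by (simp add: basis_def)
  then have BE: "B \<subseteq> E" using indep_subset_ground[OF m] by blast
  obtain I where I: "indep I" "card I = mrank E indep"
    using rk_attained[OF m, of E] unfolding mrank_def by blast
  have "\<not> card B < card I"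
  proof
    assume "card B < card I"
    then obtain e where "e \<in> I - B" "indep (insert e B)" using indep_augment[OF m iB I(1)] by blast
    moreover have "insert e B \<subseteq> E" using calculation indep_subset_ground[OF m] by blast
    ultimately show False using b by (auto simp: basis_def)
  qed
  moreover have "card B \<le> mrank E indep" unfolding mrank_def using card_le_rk[OF m _ BE iB] by simp
  ultimately show "indep B \<and> card B = mrank E indep" using I iB by simp
next
  assume a: "indep B \<and> card B = mrank E indep"
  show "basis E indep B" unfolding basis_def
  proof (intro conjI allI impI)
    show "indep B" using a by simp
    fix X assume X: "indep X \<and> B \<subseteq> X \<and> X \<subseteq> E"
    then have "card X \<le> card B" using card_le_rk[OF m, of E X] a unfolding mrank_def by simp
    moreover have "finite X" using indep_finite[OF m] X by blast
    ultimately show "X = B" using X card_subset_eq card_mono by (metis antisym)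
  qed
qed

lemma dependent_contains_circuit:
  assumes m: "matroid E indep" and XE: "X \<subseteq> E" and dep: "\<not> indep X"
  shows "\<exists>C \<subseteq> X. circuit E indep C"
proof -
  obtain C where C: "C \<subseteq> X" "\<not> indep C"
    and least: "\<And>D. D \<subseteq> X \<Longrightarrow> \<not> indep D \<Longrightarrow> card C \<le> card D"
    using ex_has_least_nat[of "\<lambda>C. C \<subseteq> X \<and> \<not> indep C" X card] dep by blast
  have "finite X" using XE m finite_subset by (auto simp: matroid_def)
  then have "finite C" using C(1) finite_subset by blast
  have minimal: "indep D" if "D \<subset> C" for D
  proof -
    have "card D < card C" using that \<open>finite C\<close> psubset_card_mono by blast
    then show ?thesis using least[of D] that C(1) by fastforce
  qed
  have "C \<subseteq> E" using C(1) XE by blast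
  then show ?thesis unfolding circuit_def using C minimal by blast
qed

lemma sparse_paving_nonbasis_circuit_hyperplane:
  assumes sp: "sparse_paving E indep" and XE: "X \<subseteq> E" and cX: "card X = mrank E indep"
    and dep: "\<not> indep X"
  shows "circuit E indep X \<and> hyperplane E indep X"
proof -
  have m: "matroid E indep" using sp by (simp add: sparse_paving_def)
  have fX: "finite X" using XE m finite_subset by (auto simp: matroid_def)
  obtain C where CX: "C \<subseteq> X" and circ: "circuit E indep C"
    using dependent_contains_circuit[OF m XE dep] by blast
  have fC: "finite C" and CE: "C \<subseteq> E" using CX fX XE finite_subset by auto
  have cCX: "card C \<le> card X" using CX fX card_mono by blast
  obtain I where I: "I \<subseteq> C" "indep I" "card I = rk indep C" using rk_attained[OF m CE] by blast
  have "I \<noteq> C" using I circ by (auto simp: circuit_def)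
  then have cIC: "card I < card C" using I(1) fC psubset_card_mono by blast
  then have "\<not> spanning E indep C" using I(3) cCX cX by (simp add: spanning_def)
  then have hyp: "hyperplane E indep C" using sp circ unfolding sparse_paving_def by blast
  then have "rk indep C = mrank E indep - 1" by (simp add: hyperplane_def)
  then have "card C \<ge> mrank E indep" using cIC I(3) by linarith
  then have "C = X" using CX fX cX cCX card_subset_eq by (metis antisym)
  then show ?thesis using circ hyp by simp
qed

text \<open>The two r-sets X and X - a + b cannot both be nonbases: otherwise X is a circuit-hyperplane,
  b lies outside its closure, and augmenting X - a inside X + b produces an independent r-set
  X - a + e with e \<in> {a, b}.\<close>
lemma sparse_paving_single_exchange:
  assumes sp: "sparse_paving E indep" and XE: "X \<subseteq> E" and cX: "card X = mrank E indep"
    and a: "a \<in> X" and b: "b \<in> E" "b \<notin> X"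
  shows "basis E indep X \<or> basis E indep (insert b (X - {a}))"
proof (rule ccontr)
  have m: "matroid E indep" using sp by (simp add: sparse_paving_def)
  have fX: "finite X" using XE m finite_subset by (auto simp: matroid_def)
  have "card X > 0" using a fX card_gt_0_iff by blast
  then have cY: "card (insert b (X - {a})) = mrank E indep" using a b fX cX by simp
  assume "\<not> ?thesis"
  then have dX: "\<not> indep X" and dY: "\<not> indep (insert b (X - {a}))"
    using cX cY basis_iff_card_mrank[OF m] by auto
  have ch: "circuit E indep X" "hyperplane E indep X"
    using sparse_paving_nonbasis_circuit_hyperplane[OF sp XE cX dX] by auto
  have iJ: "indep (X - {a})" and cJ: "card (X - {a}) = mrank E indep - 1"
    using ch(1) a fX cX by (auto simp: circuit_def)
  have "b \<notin> cl E indep X" using ch(2) b by (simp add: hyperplane_def flat_def)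
  then have ne: "rk indep (insert b X) \<noteq> mrank E indep - 1"
    using b ch(2) by (simp add: cl_def hyperplane_def)
  have bXE: "insert b X \<subseteq> E" using b XE by blast
  have "card (X - {a}) \<le> rk indep (insert b X)" using card_le_rk[OF m bXE _ iJ] by blast
  then obtain I where I: "I \<subseteq> insert b X" "indep I" "card (X - {a}) < card I"
    using rk_attained[OF m bXE] ne cJ by (metis le_neq_implies_less)
  then obtain e where e: "e \<in> I - (X - {a})" "indep (insert e (X - {a}))"
    using indep_augment[OF m iJ I(2)] by blast
  moreover have "e = a \<or> e = b" using e I by blast
  moreover have "insert a (X - {a}) = X" using a by blast
  ultimately show False using dX dY by auto
qed

lemma card_Diff_sym:
  "finite S \<Longrightarrow> finite T \<Longrightarrow> card S = card T \<Longrightarrow> card (S - T) = card (T - S)"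
  by (simp add: card_Diff_subset_Int Int_commute)

lemma card_exchange_Diff_less:
  assumes "finite A" "x \<in> A - B" "y \<in> B"
  shows "card (insert y (A - {x}) - B) < card (A - B)"
proof -
  have "insert y (A - {x}) - B = (A - B) - {x}" using assms(3) by auto
  then show ?thesis using card_Diff1_less[of "A - B" x] assms(1,2) by simp
qed

text \<open>The bases of a sparse paving matroid of rank r, abstracted to what the connectivity argument
  needs: no two r-sets that differ by a single exchange are both nonbases.\<close>
locale sparse_paving_bases =
  fixes E :: "'a set" and r :: nat and bas :: "'a set \<Rightarrow> bool"
  assumes finite_ground: "finite E"
    and bas_subset: "bas S \<Longrightarrow> S \<subseteq> E"
    and bas_card: "bas S \<Longrightarrow> card S = r"
    and single_exchange:
      "X \<subseteq> E \<Longrightarrow> card X = r \<Longrightarrow> a \<in> X \<Longrightarrow> b \<in> E \<Longrightarrow> b \<notin> X \<Longrightarrow> bas X \<or> bas (insert b (X - {a}))"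
begin

definition vertices :: "('a set \<times> 'a set \<times> 'a set) set" where
  "vertices = {(A1, A2, A3). bas A1 \<and> bas A2 \<and> A1 \<inter> A2 = {} \<and> A3 = E - (A1 \<union> A2)}"

definition edge :: "'a set \<times> 'a set \<times> 'a set \<Rightarrow> 'a set \<times> 'a set \<times> 'a set \<Rightarrow> bool" where
  "edge u v \<longleftrightarrow> u \<in> vertices \<and> v \<in> vertices \<and> bp_adj u v"

lemma edge_vertices: "edge u v \<Longrightarrow> v \<in> vertices"
  by (simp add: edge_def)

lemma bas_finite: "bas S \<Longrightarrow> finite S"
  using bas_subset finite_ground finite_subset by blast

lemma bas_subset_eq: "bas S \<Longrightarrow> bas T \<Longrightarrow> S \<subseteq> T \<Longrightarrow> S = T"
  using bas_card bas_finite card_subset_eq by metis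

lemma card_Diff_bas: "bas S \<Longrightarrow> bas T \<Longrightarrow> card (S - T) = card (T - S)"
  using bas_card bas_finite card_Diff_sym by metis

lemma card_exchange:
  assumes "S \<subseteq> E" "card S = r" "a \<in> S" "b \<notin> S"
  shows "card (insert b (S - {a})) = r"
proof -
  have "finite S" using assms(1) finite_ground finite_subset by blast
  then have "card S > 0" using assms(3) card_gt_0_iff by blast
  then show ?thesis using assms \<open>finite S\<close> by simp
qed

lemma bas_exchange_out_either:
  assumes "S \<subseteq> E" "card S = r" "y \<in> E" "y \<notin> S" "x1 \<in> S" "x2 \<in> S" "x1 \<noteq> x2"
  shows "bas (insert y (S - {x1})) \<or> bas (insert y (S - {x2}))"
proof -
  have "insert x1 (insert y (S - {x1}) - {x2}) = insert y (S - {x2})" using assms by auto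
  moreover have "bas (insert y (S - {x1})) \<or> bas (insert x1 (insert y (S - {x1}) - {x2}))"
    by (rule single_exchange) (use assms card_exchange in auto)
  ultimately show ?thesis by simp
qed

lemma bas_exchange_in_either:
  assumes "S \<subseteq> E" "card S = r" "x \<in> S" "y1 \<in> E" "y1 \<notin> S" "y2 \<in> E" "y2 \<notin> S" "y1 \<noteq> y2"
  shows "bas (insert y1 (S - {x})) \<or> bas (insert y2 (S - {x}))"
proof -
  have "insert y2 (insert y1 (S - {x}) - {y1}) = insert y2 (S - {x})" using assms by auto
  moreover have "bas (insert y1 (S - {x})) \<or> bas (insert y2 (insert y1 (S - {x}) - {y1}))"
    by (rule single_exchange) (use assms card_exchange in auto)
  ultimately show ?thesis by simp
qed

lemma exchange_in_ground:
  assumes "S \<subseteq> E" "card S = r" "a \<in> S" "b \<in> E" "b \<notin> S"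
  shows "insert b (S - {a}) \<subseteq> E \<and> card (insert b (S - {a})) = r"
  using assms card_exchange by blast

lemma bas_if_exchange_of_nonbasis:
  assumes N: "N \<subseteq> E \<and> card N = r" "\<not> bas N" and S: "S \<subseteq> E \<and> card S = r"
    and diff: "S - N = {b}"
  shows "bas S"
proof -
  have "finite N" "finite S" using N S finite_ground finite_subset by auto
  then have "card (N - S) = 1" using card_Diff_sym[of S N] N S diff by simp
  then obtain a where a: "N - S = {a}" by (rule card_1_singletonE)
  then have "S = insert b (N - {a})" using diff by blast
  then show ?thesis using single_exchange[of N a b] N S a diff by blast
qed

lemma bas_exchange_towards:
  assumes bS: "bas S" and bT: "bas T" and y: "y \<in> T" "y \<notin> S"
  shows "\<exists>x\<in>S - T. bas (insert y (S - {x}))"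
proof -
  have SE: "S \<subseteq> E" "card S = r" and TE: "T \<subseteq> E" "card T = r"
    using bS bT bas_subset bas_card by auto
  have "S - T \<noteq> {}" using bas_subset_eq[OF bS bT] y by blast
  then obtain x1 where x1: "x1 \<in> S - T" by blast
  show ?thesis
  proof (cases "S - T = {x1}")
    case True
    then have "insert y (S - {x1}) \<subseteq> T" using y by blast
    moreover have "card (insert y (S - {x1})) = r" using card_exchange SE x1 y by blast
    ultimately have "insert y (S - {x1}) = T"
      using card_subset_eq TE bas_finite[OF bT] by metis
    then show ?thesis using x1 bT by auto
  next
    case False
    then obtain x2 where x2: "x2 \<in> S - T" "x2 \<noteq> x1" using x1 by blast
    have "bas (insert y (S - {x1})) \<or> bas (insert y (S - {x2}))"
      using bas_exchange_out_either[OF SE, of y x1 x2] x1 x2 y TE by auto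
    then show ?thesis using x1 x2 by blast
  qed
qed

lemma edge_swap_12:
  assumes u: "(A1, A2, A3) \<in> vertices" and x: "x \<in> A1" and y: "y \<in> A2"
    and b1: "bas (insert y (A1 - {x}))" and b2: "bas (insert x (A2 - {y}))"
  shows "edge (A1, A2, A3) (insert y (A1 - {x}), insert x (A2 - {y}), A3)"
proof -
  have d: "A1 \<inter> A2 = {}" and A3: "A3 = E - (A1 \<union> A2)" using u by (auto simp: vertices_def)
  have "(insert y (A1 - {x}), insert x (A2 - {y}), A3) \<in> vertices"
    using d A3 b1 b2 x y by (auto simp: vertices_def)
  moreover have "A1 - insert y (A1 - {x}) = {x}" "A2 - insert x (A2 - {y}) = {y}"
    using x y d by auto
  ultimately show ?thesis using u by (simp add: edge_def bp_adj_def)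
qed

lemma edge_swap_13:
  assumes u: "(A1, A2, A3) \<in> vertices" and x: "x \<in> A1" and y: "y \<in> A3"
    and b1: "bas (insert y (A1 - {x}))"
  shows "edge (A1, A2, A3) (insert y (A1 - {x}), A2, insert x (A3 - {y}))"
proof -
  have d: "A1 \<inter> A2 = {}" and A3: "A3 = E - (A1 \<union> A2)" and "A1 \<subseteq> E"
    using u bas_subset by (auto simp: vertices_def)
  then have "(insert y (A1 - {x}), A2, insert x (A3 - {y})) \<in> vertices"
    using u b1 x y by (auto simp: vertices_def)
  moreover have "A1 - insert y (A1 - {x}) = {x}" "A3 - insert x (A3 - {y}) = {y}"
    using x y A3 by auto
  ultimately show ?thesis using u by (simp add: edge_def bp_adj_def)
qed

lemma edge_swap_23:
  assumes u: "(A1, A2, A3) \<in> vertices" and x: "x \<in> A2" and y: "y \<in> A3"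
    and b2: "bas (insert y (A2 - {x}))"
  shows "edge (A1, A2, A3) (A1, insert y (A2 - {x}), insert x (A3 - {y}))"
proof -
  have d: "A1 \<inter> A2 = {}" and A3: "A3 = E - (A1 \<union> A2)" and "A2 \<subseteq> E"
    using u bas_subset by (auto simp: vertices_def)
  then have "(A1, insert y (A2 - {x}), insert x (A3 - {y})) \<in> vertices"
    using u b2 x y by (auto simp: vertices_def)
  moreover have "A2 - insert y (A2 - {x}) = {x}" "A3 - insert x (A3 - {y}) = {y}"
    using x y A3 by auto
  ultimately show ?thesis using u by (simp add: edge_def bp_adj_def)
qed

lemma walk_to_second:
  assumes B: "(B1, B2, B3) \<in> vertices"
  shows "(B1, A2, A3) \<in> vertices \<Longrightarrow> edge\<^sup>*\<^sup>* (B1, A2, A3) (B1, B2, B3)"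
proof (induction "card (A2 - B2)" arbitrary: A2 A3 rule: less_induct)
  case less
  have bA2: "bas A2" and A3: "A3 = E - (B1 \<union> A2)" using less.prems by (auto simp: vertices_def)
  have bB2: "bas B2" and dB: "B1 \<inter> B2 = {}" and B3: "B3 = E - (B1 \<union> B2)"
    using B by (auto simp: vertices_def)
  show ?case
  proof (cases "A2 = B2")
    case True
    then show ?thesis using A3 B3 by simp
  next
    case False
    then obtain y where y: "y \<in> B2" "y \<notin> A2" using bas_subset_eq[OF bB2 bA2] by blast
    then have yA3: "y \<in> A3" using dB A3 bas_subset[OF bB2] by blast
    obtain x where x: "x \<in> A2 - B2" "bas (insert y (A2 - {x}))"
      using bas_exchange_towards[OF bA2 bB2 y] by blast
    then have st: "edge (B1, A2, A3) (B1, insert y (A2 - {x}), insert x (A3 - {y}))"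
      using edge_swap_23[OF less.prems _ yA3] by blast
    have "card (insert y (A2 - {x}) - B2) < card (A2 - B2)"
      using card_exchange_Diff_less[OF bas_finite[OF bA2] x(1) y(1)] .
    then have "edge\<^sup>*\<^sup>* (B1, insert y (A2 - {x}), insert x (A3 - {y})) (B1, B2, B3)"
      using less.hyps edge_vertices[OF st] by blast
    with st show ?thesis by (rule converse_rtranclp_into_rtranclp)
  qed
qed

lemma step_from_third:
  assumes B: "(B1, B2, B3) \<in> vertices" and A: "(A1, A2, A3) \<in> vertices"
    and y: "y \<in> B1" "y \<in> A3"
  shows "\<exists>A1' A2' A3'. edge (A1, A2, A3) (A1', A2', A3') \<and> card (A1' - B1) < card (A1 - B1)"
proof -
  have bA1: "bas A1" and "y \<notin> A1" using A y by (auto simp: vertices_def)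
  moreover have bB1: "bas B1" using B by (auto simp: vertices_def)
  ultimately obtain x where x: "x \<in> A1 - B1" "bas (insert y (A1 - {x}))"
    using bas_exchange_towards y(1) by blast
  then have "edge (A1, A2, A3) (insert y (A1 - {x}), A2, insert x (A3 - {y}))"
    using edge_swap_13[OF A _ y(2)] by blast
  moreover have "card (insert y (A1 - {x}) - B1) < card (A1 - B1)"
    using card_exchange_Diff_less[OF bas_finite[OF bA1] x(1) y(1)] .
  ultimately show ?thesis by blast
qed

lemma double_swap_among_three:
  assumes bA1: "bas A1" and bA2: "bas A2" and d: "A1 \<inter> A2 = {}" and y: "y \<in> A2"
    and abc: "{a, b, c} \<subseteq> A1" "a \<noteq> b" "b \<noteq> c" "a \<noteq> c"
  shows "\<exists>x\<in>{a, b, c}. bas (insert y (A1 - {x})) \<and> bas (insert x (A2 - {y}))"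
proof -
  have A1E: "A1 \<subseteq> E" "card A1 = r" and A2E: "A2 \<subseteq> E" "card A2 = r"
    using bA1 bA2 bas_subset bas_card by auto
  have out: "bas (insert y (A1 - {p})) \<or> bas (insert y (A1 - {q}))"
    if "p \<in> {a, b, c}" "q \<in> {a, b, c}" "p \<noteq> q" for p q
    using bas_exchange_out_either[OF A1E, of y p q] that abc y d A2E by blast
  have into: "bas (insert p (A2 - {y})) \<or> bas (insert q (A2 - {y}))"
    if "p \<in> {a, b, c}" "q \<in> {a, b, c}" "p \<noteq> q" for p q
    using bas_exchange_in_either[OF A2E y, of p q] that abc d A1E by blast
  show ?thesis
    using out[of a b] out[of a c] out[of b c] into[of a b] into[of a c] into[of b c] abc by auto
qed

lemma single_difference_double_swap:
  assumes B: "(B1, B2, B3) \<in> vertices" and A: "(A1, A2, A3) \<in> vertices"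
    and X: "A1 - B1 = {x}" and Y: "B1 - A1 = {y}" and y: "y \<in> A2"
    and no_third: "\<And>z. z \<in> A3 \<Longrightarrow> \<not> bas (insert z (A2 - {y}))"
  shows "bas (insert y (A1 - {x})) \<and> bas (insert x (A2 - {y}))"
proof
  have bB1: "bas B1" and bB2: "bas B2" and dB: "B1 \<inter> B2 = {}" using B by (auto simp: vertices_def)
  have bA1: "bas A1" and bA2: "bas A2" and d: "A1 \<inter> A2 = {}" and A3: "A3 = E - (A1 \<union> A2)"
    using A by (auto simp: vertices_def)
  have A1E: "A1 \<subseteq> E" and A2E: "A2 \<subseteq> E" "card A2 = r" using bA1 bA2 bas_subset bas_card by auto
  have x: "x \<in> A1" "x \<notin> A2" "x \<in> E" using X d A1E by auto
  have B1_eq: "insert y (A1 - {x}) = B1" using X Y by blast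
  then show "bas (insert y (A1 - {x}))" using bB1 by simp
  show "bas (insert x (A2 - {y}))"
  proof (cases "A3 = {}")
    case True
    then have "E - B1 = insert x (A2 - {y})" using A3 B1_eq d x y A1E A2E by blast
    moreover have "B2 \<subseteq> E - B1" using dB bas_subset[OF bB2] by blast
    moreover have "card (insert x (A2 - {y})) = r" using card_exchange[OF A2E y x(2)] .
    ultimately have "B2 = insert x (A2 - {y})"
      using card_subset_eq bas_card[OF bB2] finite_ground by (metis finite_Diff)
    then show ?thesis using bB2 by simp
  next
    case False
    then obtain z where z: "z \<in> A3" by blast
    then have "bas (insert x (A2 - {y})) \<or> bas (insert z (A2 - {y}))"
      using bas_exchange_in_either[OF A2E y] x A3 by blast
    then show ?thesis using no_third z by blast
  qed
qed

lemma common_element_if_stuck: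
  assumes A: "(A1, A2, {}) \<in> vertices" and bB1: "bas B1"
    and X: "A1 - B1 = {x1, x2}" "x1 \<noteq> x2" and Y: "B1 - A1 = {y1, y2}" "y1 \<noteq> y2"
    and T1: "\<not> bas (insert y1 (A1 - {x1}))" and U1: "\<not> bas (insert x2 (A2 - {y1}))"
  shows "A1 \<inter> B1 \<noteq> {}"
proof
  assume disj: "A1 \<inter> B1 = {}"
  have bA1: "bas A1" and bA2: "bas A2" and d: "A1 \<inter> A2 = {}" and EA: "E \<subseteq> A1 \<union> A2"
    using A by (auto simp: vertices_def)
  have A1E: "A1 \<subseteq> E" "card A1 = r" and A2E: "A2 \<subseteq> E" "card A2 = r"
    using bA1 bA2 bas_subset bas_card by auto
  have A1_eq: "A1 = {x1, x2}" using X disj by blast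
  have y: "{y1, y2} \<subseteq> A2" using Y EA bas_subset[OF bB1] by auto
  have "card {y1, y2} = card A2" using A2E A1E A1_eq X(2) Y(2) by simp
  then have A2_eq: "A2 = {y1, y2}" using card_subset_eq[OF bas_finite[OF bA2] y] by simp
  have x2: "x2 \<in> E" "x2 \<notin> A2" and y1: "y1 \<in> E" "y1 \<notin> A1"
    using A1_eq A1E A2_eq A2E d by auto
  have "insert x2 (A2 - {y1}) \<subseteq> E \<and> card (insert x2 (A2 - {y1})) = r"
    using exchange_in_ground[OF A2E] A2_eq x2 by blast
  moreover have "insert y1 (A1 - {x1}) \<subseteq> E \<and> card (insert y1 (A1 - {x1})) = r"
    using exchange_in_ground[OF A1E] A1_eq y1 by blast
  moreover have "insert y1 (A1 - {x1}) - insert x2 (A2 - {y1}) = {y1}"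
    using A1_eq A2_eq X(2) Y(2) d by auto
  ultimately show False using bas_if_exchange_of_nonbasis U1 T1 by blast
qed

text \<open>The walk S1, S2, S3 = B1 moves c out of A1 and back in, so that each intermediate
  r-set differs by a single exchange from one of the known nonbases.\<close>
lemma detour_through_common:
  assumes A: "(A1, A2, {}) \<in> vertices" and bB1: "bas B1"
    and X: "A1 - B1 = {x1, x2}" "x1 \<noteq> x2" and Y: "B1 - A1 = {y1, y2}" "y1 \<noteq> y2"
    and c: "c \<in> A1" "c \<in> B1"
    and T1: "\<not> bas (insert y1 (A1 - {x1}))" and U1: "\<not> bas (insert x2 (A2 - {y1}))"
    and U2: "\<not> bas (insert x1 (A2 - {y2}))"
  shows "\<exists>A2'. edge\<^sup>*\<^sup>* (A1, A2, {}) (B1, A2', {}) \<and> (B1, A2', {}) \<in> vertices"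
proof -
  have bA1: "bas A1" and bA2: "bas A2" and d: "A1 \<inter> A2 = {}" and EA: "E \<subseteq> A1 \<union> A2"
    using A by (auto simp: vertices_def)
  have A1E: "A1 \<subseteq> E" "card A1 = r" and A2E: "A2 \<subseteq> E" "card A2 = r"
    using bA1 bA2 bas_subset bas_card by auto
  have x: "x1 \<in> A1" "x2 \<in> A1" "x1 \<notin> A2" "x2 \<notin> A2" "x1 \<notin> B1" "x2 \<notin> B1"
    and xE: "x1 \<in> E" "x2 \<in> E" using X d A1E by auto
  have y: "y1 \<in> A2" "y2 \<in> A2" "y1 \<notin> A1" "y2 \<notin> A1" "y1 \<in> B1" "y2 \<in> B1"
    using Y EA bas_subset[OF bB1] by auto
  have yE: "y1 \<in> E" "y2 \<in> E" using y A2E by auto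
  have cx: "c \<noteq> x1" "c \<noteq> x2" "c \<notin> A2" "c \<in> E" "c \<noteq> y2" using c X Y d A1E by auto
  define S1 W1 S2 W2 W3 where "S1 = insert y1 (A1 - {c})" and "W1 = insert c (A2 - {y1})"
    and "S2 = insert y2 (S1 - {x1})" and "W2 = insert x1 (W1 - {y2})" and "W3 = insert x2 (W2 - {c})"
  note defs = S1_def W1_def S2_def W2_def W3_def
  have N1: "insert y1 (A1 - {x1}) \<subseteq> E \<and> card (insert y1 (A1 - {x1})) = r"
    using exchange_in_ground[OF A1E x(1) yE(1) y(3)] .
  have N2: "insert x2 (A2 - {y1}) \<subseteq> E \<and> card (insert x2 (A2 - {y1})) = r"
    using exchange_in_ground[OF A2E y(1) xE(2) x(4)] .
  have N3: "insert x1 (A2 - {y2}) \<subseteq> E \<and> card (insert x1 (A2 - {y2})) = r"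
    using exchange_in_ground[OF A2E y(2) xE(1) x(3)] .
  have S1E: "S1 \<subseteq> E \<and> card S1 = r"
    unfolding S1_def by (rule exchange_in_ground[OF A1E c(1) yE(1) y(3)])
  have W1E: "W1 \<subseteq> E \<and> card W1 = r"
    unfolding W1_def by (rule exchange_in_ground[OF A2E y(1) cx(4,3)])
  have S2E: "S2 \<subseteq> E \<and> card S2 = r"
    unfolding S2_def using S1E yE(2)
    by (intro exchange_in_ground) (use x cx y Y(2) in \<open>auto simp: S1_def\<close>)
  have W2E: "W2 \<subseteq> E \<and> card W2 = r"
    unfolding W2_def using W1E xE(1)
    by (intro exchange_in_ground) (use x cx y Y(2) in \<open>auto simp: W1_def\<close>)
  have W3E: "W3 \<subseteq> E \<and> card W3 = r"
    unfolding W3_def using W2E xE(2)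
    by (intro exchange_in_ground) (use x cx y X(2) in \<open>auto simp: W2_def W1_def\<close>)
  note distinct = x y cx X(2) Y(2)
  have bS1: "bas S1"
    by (rule bas_if_exchange_of_nonbasis[OF N1 T1 S1E, of x1]) (use distinct in \<open>auto simp: defs\<close>)
  have bW1: "bas W1"
    by (rule bas_if_exchange_of_nonbasis[OF N2 U1 W1E, of c]) (use distinct in \<open>auto simp: defs\<close>)
  have bS2: "bas S2"
    by (rule bas_if_exchange_of_nonbasis[OF N1 T1 S2E, of y2]) (use distinct in \<open>auto simp: defs\<close>)
  have bW2: "bas W2"
    by (rule bas_if_exchange_of_nonbasis[OF N3 U2 W2E, of c]) (use distinct in \<open>auto simp: defs\<close>)
  have bW3: "bas W3"
    by (rule bas_if_exchange_of_nonbasis[OF N3 U2 W3E, of x2]) (use distinct in \<open>auto simp: defs\<close>)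
  have S3_eq: "insert c (S2 - {x2}) = B1" using X Y c cx x y by (auto simp: defs)
  have e1: "edge (A1, A2, {}) (S1, W1, {})"
    using edge_swap_12[OF A c(1) y(1)] bS1 bW1 by (simp add: defs)
  have e2: "edge (S1, W1, {}) (S2, W2, {})"
    using edge_swap_12[OF edge_vertices[OF e1], of x1 y2] bS2 bW2 distinct by (simp add: defs)
  have e3: "edge (S2, W2, {}) (B1, W3, {})"
    using edge_swap_12[OF edge_vertices[OF e2], of x2 c] bB1 bW3 S3_eq distinct by (simp add: defs)
  have "edge\<^sup>*\<^sup>* (A1, A2, {}) (B1, W3, {})"
    using e1 e2 e3 by (meson converse_rtranclp_into_rtranclp r_into_rtranclp)
  then show ?thesis using edge_vertices[OF e3] by blast
qed

lemma third_empty_if_stuck: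
  assumes A: "(A1, A2, A3) \<in> vertices" and y: "y1 \<in> A2" "y2 \<in> A2" "y1 \<noteq> y2"
    and no_third: "\<And>y z. y \<in> {y1, y2} \<Longrightarrow> z \<in> A3 \<Longrightarrow> \<not> bas (insert z (A2 - {y}))"
  shows "A3 = {}"
proof (rule ccontr)
  have A2E: "A2 \<subseteq> E" "card A2 = r" and A3: "A3 = E - (A1 \<union> A2)"
    using A bas_subset bas_card by (auto simp: vertices_def)
  assume "A3 \<noteq> {}"
  then obtain z where z: "z \<in> A3" by blast
  then have "bas (insert z (A2 - {y1})) \<or> bas (insert z (A2 - {y2}))"
    using bas_exchange_out_either[OF A2E, of z y1 y2] A3 y by blast
  then show False using no_third z by blast
qed

lemma walk_when_stuck_two:
  assumes B: "(B1, B2, B3) \<in> vertices" and A: "(A1, A2, A3) \<in> vertices"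
    and X: "A1 - B1 = {x1, x2}" "x1 \<noteq> x2" and Y: "B1 - A1 = {y1, y2}" "y1 \<noteq> y2"
    and in_second: "B1 - A1 \<subseteq> A2"
    and no_third: "\<And>y z. y \<in> B1 - A1 \<Longrightarrow> z \<in> A3 \<Longrightarrow> \<not> bas (insert z (A2 - {y}))"
    and no_double: "\<And>x y. x \<in> A1 - B1 \<Longrightarrow> y \<in> B1 - A1 \<Longrightarrow>
      \<not> (bas (insert y (A1 - {x})) \<and> bas (insert x (A2 - {y})))"
  shows "\<exists>A2' A3'. edge\<^sup>*\<^sup>* (A1, A2, A3) (B1, A2', A3') \<and> (B1, A2', A3') \<in> vertices"
proof -
  have bA1: "bas A1" and bA2: "bas A2" and d: "A1 \<inter> A2 = {}" using A by (auto simp: vertices_def)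
  have bB1: "bas B1" using B by (auto simp: vertices_def)
  have A1E: "A1 \<subseteq> E" "card A1 = r" and A2E: "A2 \<subseteq> E" "card A2 = r"
    using bA1 bA2 bas_subset bas_card by auto
  have x: "x1 \<in> A1" "x2 \<in> A1" "x1 \<notin> A2" "x2 \<notin> A2" "x1 \<in> E" "x2 \<in> E" using X d A1E by auto
  have y: "y1 \<in> A2" "y2 \<in> A2" "y1 \<notin> A1" "y2 \<notin> A1" "y1 \<in> E" "y2 \<in> E"
    using Y in_second A2E by auto
  have "A3 = {}" using third_empty_if_stuck[OF A y(1,2) Y(2)] no_third Y by blast
  then have A': "(A1, A2, {}) \<in> vertices" using A by simp
  obtain a a' where a: "A1 - B1 = {a, a'}" "a \<noteq> a'" and T1: "\<not> bas (insert y1 (A1 - {a}))"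
  proof (cases "bas (insert y1 (A1 - {x1}))")
    case False
    then show ?thesis using that X by blast
  next
    case True
    then have "\<not> bas (insert x1 (A2 - {y1}))" using no_double X Y by blast
    then have "bas (insert x2 (A2 - {y1}))"
      using bas_exchange_in_either[OF A2E y(1), of x1 x2] x X(2) by blast
    then have "\<not> bas (insert y1 (A1 - {x2}))" using no_double X Y by blast
    then show ?thesis using that[of x2 x1] X by (simp add: insert_commute)
  qed
  have a_mem: "a \<in> A1" "a' \<in> A1" using a by auto
  have "bas (insert y1 (A1 - {a'}))"
    using T1 bas_exchange_out_either[OF A1E, of y1 a a'] a_mem y a(2) by blast
  then have U1: "\<not> bas (insert a' (A2 - {y1}))" using no_double a Y by blast
  have "bas (insert y2 (A1 - {a}))"
    using T1 bas_exchange_in_either[OF A1E, of a y1 y2] a_mem y Y(2) by blast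
  then have U2: "\<not> bas (insert a (A2 - {y2}))" using no_double a Y by blast
  obtain c where "c \<in> A1" "c \<in> B1" using common_element_if_stuck[OF A' bB1 a Y T1 U1] by blast
  then obtain A2' where "edge\<^sup>*\<^sup>* (A1, A2, {}) (B1, A2', {})" "(B1, A2', {}) \<in> vertices"
    using detour_through_common[OF A' bB1 a Y _ _ T1 U1 U2] by blast
  then show ?thesis using \<open>A3 = {}\<close> by blast
qed

lemma walk_when_stuck:
  assumes B: "(B1, B2, B3) \<in> vertices" and A: "(A1, A2, A3) \<in> vertices" and ne: "A1 \<noteq> B1"
    and in_second: "B1 - A1 \<subseteq> A2"
    and no_third: "\<And>y z. y \<in> B1 - A1 \<Longrightarrow> z \<in> A3 \<Longrightarrow> \<not> bas (insert z (A2 - {y}))"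
    and no_double: "\<And>x y. x \<in> A1 - B1 \<Longrightarrow> y \<in> B1 - A1 \<Longrightarrow>
      \<not> (bas (insert y (A1 - {x})) \<and> bas (insert x (A2 - {y})))"
  shows "\<exists>A2' A3'. edge\<^sup>*\<^sup>* (A1, A2, A3) (B1, A2', A3') \<and> (B1, A2', A3') \<in> vertices"
proof -
  have bA1: "bas A1" and bA2: "bas A2" and d: "A1 \<inter> A2 = {}" using A by (auto simp: vertices_def)
  have bB1: "bas B1" using B by (auto simp: vertices_def)
  have ceq: "card (A1 - B1) = card (B1 - A1)" using card_Diff_bas[OF bA1 bB1] .
  have "A1 - B1 \<noteq> {}" using bas_subset_eq[OF bA1 bB1] ne by blast
  then have kpos: "card (A1 - B1) > 0" using bas_finite[OF bA1] by (simp add: card_gt_0_iff)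
  have "card (A1 - B1) < 3"
  proof (rule ccontr)
    assume "\<not> card (A1 - B1) < 3"
    then obtain T where "T \<subseteq> A1 - B1" "card T = 3"
      by (meson not_less obtain_subset_with_card_n)
    then obtain a b c where abc: "{a, b, c} \<subseteq> A1 - B1" "a \<noteq> b" "b \<noteq> c" "a \<noteq> c"
      using card_3_iff by metis
    have "B1 - A1 \<noteq> {}" using ceq kpos by (metis card.empty less_irrefl)
    then obtain y where y: "y \<in> B1 - A1" by blast
    then obtain x where "x \<in> {a, b, c}" "bas (insert y (A1 - {x}))" "bas (insert x (A2 - {y}))"
      using double_swap_among_three[OF bA1 bA2 d, of y a b c] in_second abc by blast
    then show False using no_double abc y by blast
  qed
  moreover have "card (A1 - B1) \<noteq> 1"
  proof
    assume "card (A1 - B1) = 1"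
    moreover then have "card (B1 - A1) = 1" using ceq by simp
    ultimately obtain x y where X: "A1 - B1 = {x}" and Y: "B1 - A1 = {y}"
      using card_1_singletonE by metis
    then have "bas (insert y (A1 - {x})) \<and> bas (insert x (A2 - {y}))"
      using single_difference_double_swap[OF B A X Y] in_second no_third by blast
    then show False using no_double X Y by blast
  qed
  ultimately have "card (A1 - B1) = 2" "card (B1 - A1) = 2" using kpos ceq by linarith+
  then obtain x1 x2 y1 y2 where "A1 - B1 = {x1, x2}" "x1 \<noteq> x2" "B1 - A1 = {y1, y2}" "y1 \<noteq> y2"
    using card_2_iff by metis
  then show ?thesis using walk_when_stuck_two[OF B A _ _ _ _ in_second no_third no_double] by blast
qed

lemma step_towards_first:
  assumes B: "(B1, B2, B3) \<in> vertices" and A: "(A1, A2, A3) \<in> vertices" and ne: "A1 \<noteq> B1"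
  shows "\<exists>A1' A2' A3'. edge\<^sup>*\<^sup>* (A1, A2, A3) (A1', A2', A3') \<and> (A1', A2', A3') \<in> vertices
           \<and> card (A1' - B1) < card (A1 - B1)"
proof -
  have A3: "A3 = E - (A1 \<union> A2)" using A by (auto simp: vertices_def)
  have bA1: "bas A1" and bB1: "bas B1" using A B by (auto simp: vertices_def)
  have "A1 - B1 \<noteq> {}" using bas_subset_eq[OF bA1 bB1] ne by blast
  then have kpos: "card (A1 - B1) > 0" using bas_finite[OF bA1] by (simp add: card_gt_0_iff)
  have B1E: "B1 \<subseteq> E" using bas_subset[OF bB1] .
  consider (third) y where "y \<in> B1" "y \<in> A3"
    | (via_second) y z where "y \<in> B1 - A1" "y \<in> A2" "z \<in> A3" "bas (insert z (A2 - {y}))"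
    | (double) x y where "x \<in> A1 - B1" "y \<in> B1 - A1" "y \<in> A2"
        "bas (insert y (A1 - {x}))" "bas (insert x (A2 - {y}))"
    | (stuck) "B1 - A1 \<subseteq> A2" "\<forall>y\<in>B1 - A1. \<forall>z\<in>A3. \<not> bas (insert z (A2 - {y}))"
        "\<forall>x\<in>A1 - B1. \<forall>y\<in>B1 - A1. \<not> (bas (insert y (A1 - {x})) \<and> bas (insert x (A2 - {y})))"
    using A3 B1E by blast
  then show ?thesis
  proof cases
    case third
    then show ?thesis using step_from_third[OF B A] edge_vertices by blast
  next
    case via_second
    then have st: "edge (A1, A2, A3) (A1, insert z (A2 - {y}), insert y (A3 - {z}))"
      using edge_swap_23[OF A] by blast
    obtain A1' A2' A3' where st2: "edge (A1, insert z (A2 - {y}), insert y (A3 - {z})) (A1', A2', A3')"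
      and "card (A1' - B1) < card (A1 - B1)"
      using step_from_third[OF B edge_vertices[OF st], of y] via_second by blast
    moreover have "edge\<^sup>*\<^sup>* (A1, A2, A3) (A1', A2', A3')"
      using st st2 by (meson converse_rtranclp_into_rtranclp r_into_rtranclp)
    ultimately show ?thesis using edge_vertices[OF st2] by blast
  next
    case double
    then have "edge (A1, A2, A3) (insert y (A1 - {x}), insert x (A2 - {y}), A3)"
      using edge_swap_12[OF A] by blast
    moreover have "card (insert y (A1 - {x}) - B1) < card (A1 - B1)"
      using card_exchange_Diff_less[OF bas_finite[OF bA1]] double by blast
    ultimately show ?thesis using edge_vertices by blast
  next
    case stuck
    then obtain A2' A3' where "edge\<^sup>*\<^sup>* (A1, A2, A3) (B1, A2', A3')" "(B1, A2', A3') \<in> vertices"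
      using walk_when_stuck[OF B A ne] by blast
    then show ?thesis using kpos by fastforce
  qed
qed

lemma walk_to_first:
  assumes B: "(B1, B2, B3) \<in> vertices"
  shows "(A1, A2, A3) \<in> vertices \<Longrightarrow>
    \<exists>A2' A3'. edge\<^sup>*\<^sup>* (A1, A2, A3) (B1, A2', A3') \<and> (B1, A2', A3') \<in> vertices"
proof (induction "card (A1 - B1)" arbitrary: A1 A2 A3 rule: less_induct)
  case less
  show ?case
  proof (cases "A1 = B1")
    case True
    then show ?thesis using less.prems by blast
  next
    case False
    then obtain A1' A2' A3' where walk: "edge\<^sup>*\<^sup>* (A1, A2, A3) (A1', A2', A3')"
      and A': "(A1', A2', A3') \<in> vertices" and lt: "card (A1' - B1) < card (A1 - B1)"
      using step_towards_first[OF B less.prems] by blast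
    obtain A2'' A3'' where "edge\<^sup>*\<^sup>* (A1', A2', A3') (B1, A2'', A3'')" "(B1, A2'', A3'') \<in> vertices"
      using less.hyps[OF lt A'] by blast
    then show ?thesis using walk by (meson rtranclp_trans)
  qed
qed

theorem graph_connected_vertices: "graph_connected vertices bp_adj"
proof -
  have "edge\<^sup>*\<^sup>* u v" if u: "u \<in> vertices" and v: "v \<in> vertices" for u v
  proof -
    obtain A1 A2 A3 B1 B2 B3 where uv: "u = (A1, A2, A3)" "v = (B1, B2, B3)" by (cases u, cases v) auto
    obtain A2' A3' where walk: "edge\<^sup>*\<^sup>* u (B1, A2', A3')" and "(B1, A2', A3') \<in> vertices"
      using walk_to_first[of B1 B2 B3 A1 A2 A3] u v uv by blast
    then have "edge\<^sup>*\<^sup>* (B1, A2', A3') v" using walk_to_second v uv by blast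
    with walk show ?thesis by (rule rtranclp_trans)
  qed
  moreover have "edge = (\<lambda>u v. u \<in> vertices \<and> v \<in> vertices \<and> bp_adj u v)"
    by (simp add: edge_def fun_eq_iff)
  ultimately show ?thesis unfolding graph_connected_def by simp
qed

end

theorem theorem2p3:
  fixes E :: "'a set" and indep :: "'a set \<Rightarrow> bool"
  assumes "sparse_paving E indep"
  shows "graph_connected (bp_vertices E indep) bp_adj"
proof -
  have m: "matroid E indep" using assms by (simp add: sparse_paving_def)
  interpret sparse_paving_bases E "mrank E indep" "basis E indep"
  proof
    show "finite E" using m by (simp add: matroid_def)
    show "S \<subseteq> E" if "basis E indep S" for S
      using that indep_subset_ground[OF m] by (simp add: basis_def)
    show "card S = mrank E indep" if "basis E indep S" for S
      using that basis_iff_card_mrank[OF m] by simp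
    show "basis E indep X \<or> basis E indep (insert b (X - {a}))"
      if "X \<subseteq> E" "card X = mrank E indep" "a \<in> X" "b \<in> E" "b \<notin> X" for X a b
      using sparse_paving_single_exchange[OF assms that] .
  qed
  have "bp_vertices E indep = vertices" by (simp add: vertices_def bp_vertices_def)
  then show ?thesis using graph_connected_vertices by simp
qed

end
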